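(* Let $\mathsf{C}_B\subset\mathbf{R}^3$ be the cone generated by $x_{+0}=(1,1,0)$, $x_{-0}=(1,-1,0)$, $x_{0+}=(1,0,1)$, $x_{0-}=(1,0,-1)$, and let $\phi=(1,0,0)$ (as a linear form via the standard inner product). Then for every proper cone $\mathsf{C}_A\subset V_A$, $(\mathrm{Id}_{V_A}\otimes\gamma_2^\phi)(\mathsf{C}_A\otimes_{\max}\mathsf{C}_B\otimes_{\max}\mathsf{C}_B)=\mathsf{C}_A\otimes_{\min}\mathsf{C}_B$. More precisely, with $\psi_{\pm\pm}=\frac12(1,\pm1,\pm1)$, for every $y\in\mathbf{R}^3\otimes\mathbf{R}^3$, \[2\gamma_2^\phi(y)=(\psi_{++}\otimes\psi_{+-}+\psi_{+-}\otimes\psi_{++})(y)\,x_{+0}+(\psi_{-+}\otimes\psi_{--}+\psi_{--}\otimes\psi_{-+})(y)\,x_{-0}+(\psi_{++}\otimes\psi_{-+}+\psi_{-+}\otimes\psi_{++})(y)\,x_{0+}+(\psi_{+-}\otimes\psi_{--}+\psi_{--}\otimes\psi_{+-})(y)\,x_{0-}.\]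
   Context: Proper cone: closed convex cone in a finite-dimensional real vector space, containing no line, not contained in a hyperplane; $\mathsf{C}^*$ is its dual cone. $\mathsf{C}_1\otimes_{\min}\mathsf{C}_2=\mathrm{conv}\{x\otimes y:x\in\mathsf{C}_1,y\in\mathsf{C}_2\}$ and $\mathsf{C}_1\otimes_{\max}\mathsf{C}_2=\{z:(f\otimes g)(z)\ge0\ \forall f\in\mathsf{C}_1^*,g\in\mathsf{C}_2^*\}$. $\gamma_2^\phi=\frac12(\mathrm{Id}\otimes\phi+\phi\otimes\mathrm{Id}):\mathbf{R}^3\otimes\mathbf{R}^3\to\mathbf{R}^3$. *)

theory Defs
  imports "HOL-Analysis.Analysis"
begin

text \<open>Finite-dimensional real vector spaces are modelled as real^'i for a finite index
type 'i; the tensor product of real^'i and real^'j is modelled as real^('i \<times> 'j),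
with the elementary tensor of x and y having components x_i y_j. Linear forms are
identified with vectors via the standard inner product.\<close>

definition tensor :: "real^'i \<Rightarrow> real^'j \<Rightarrow> real^('i \<times> 'j)" (infixr "\<otimes>\<^sub>v" 70) where
  "x \<otimes>\<^sub>v y = (\<chi> p. x $ fst p * y $ snd p)"

definition proper_cone :: "(real^'i) set \<Rightarrow> bool" where
  "proper_cone C \<longleftrightarrow> closed C \<and> convex C \<and> cone C \<and> 0 \<in> C
     \<and> C \<inter> uminus ` C = {0} \<and> span C = UNIV"

definition dual_cone :: "(real^'i) set \<Rightarrow> (real^'i) set" where
  "dual_cone C = {f. \<forall>x\<in>C. 0 \<le> f \<bullet> x}"

definition tensor_min :: "(real^'i) set \<Rightarrow> (real^'j) set \<Rightarrow> (real^('i \<times> 'j)) set" where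
  "tensor_min C1 C2 = convex hull {x \<otimes>\<^sub>v y | x y. x \<in> C1 \<and> y \<in> C2}"

definition tensor_max :: "(real^'i) set \<Rightarrow> (real^'j) set \<Rightarrow> (real^('i \<times> 'j)) set" where
  "tensor_max C1 C2 = {z. \<forall>f\<in>dual_cone C1. \<forall>g\<in>dual_cone C2. 0 \<le> (f \<otimes>\<^sub>v g) \<bullet> z}"

text \<open>gamma_2^phi = 1/2 (Id \<otimes> phi + phi \<otimes> Id) : R^k \<otimes> R^k \<rightarrow> R^k.\<close>
definition gamma2 :: "real^'k \<Rightarrow> real^('k \<times> 'k) \<Rightarrow> real^'k" where
  "gamma2 \<phi> y = (\<chi> k. (1/2) * ((\<Sum>j\<in>UNIV. \<phi> $ j * y $ (k, j)) + (\<Sum>i\<in>UNIV. \<phi> $ i * y $ (i, k))))"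

text \<open>Id_{V_A} \<otimes> L for a linear map L : real^('i\<times>'j) \<rightarrow> real^'k, acting on
(V_A \<otimes> R^i) \<otimes> R^j = real^(('a \<times> 'i) \<times> 'j).\<close>
definition id_tensor :: "(real^('i::finite \<times> 'j::finite) \<Rightarrow> real^'k::finite) \<Rightarrow> real^(('a::finite \<times> 'i) \<times> 'j) \<Rightarrow> real^('a \<times> 'k)" where
  "id_tensor L z = (\<chi> p. (L (\<chi> q. z $ ((fst p, fst q), snd q))) $ snd p)"

definition xpp :: "real^3" where "xpp = vector [1, 1, 0]"
definition xmp :: "real^3" where "xmp = vector [1, -1, 0]"
definition xpq :: "real^3" where "xpq = vector [1, 0, 1]"
definition xmq :: "real^3" where "xmq = vector [1, 0, -1]"

definition CB :: "(real^3) set" where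
  "CB = convex_cone hull {xpp, xmp, xpq, xmq}"

definition phiB :: "real^3" where "phiB = vector [1, 0, 0]"

definition psi :: "real \<Rightarrow> real \<Rightarrow> real^3" where
  "psi s t = vector [1/2, s/2, t/2]"

end

theory Submission imports Defs begin

text \<open>
  Since gamma2 \<phi> (y \<otimes> y) = (\<phi> \<bullet> y) y and \<phi> is strictly positive on C_B - {0},
  every product a \<otimes> y of the minimal tensor cone is the image of (a \<otimes> y) \<otimes> y / (\<phi> \<bullet> y)
  in the maximal one. Conversely, the displayed identity writes gamma2 \<phi> as
  y \<mapsto> \<Sum>_k (S_k \<bullet> y) x_k / 2 with x_k \<in> C_B and each S_k = \<psi> \<otimes> \<psi>' + \<psi>' \<otimes> \<psi> a sum of
  products of elements of the dual cone of C_B. Contracting z \<in> C_A \<otimes>max C_B \<otimes>max C_B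
  with such an S_k gives a vector on which every element of the dual cone of C_A is
  nonnegative, hence, by the bipolar theorem, an element a_k of C_A; and
  (Id \<otimes> gamma2 \<phi>) z = \<Sum>_k a_k \<otimes> x_k / 2 lies in C_A \<otimes>min C_B.
\<close>

lemma sum_UNIV_prod:
  "sum (f :: 'i::finite \<times> 'j::finite \<Rightarrow> real) UNIV = (\<Sum>i\<in>UNIV. \<Sum>j\<in>UNIV. f (i, j))"
  by (simp add: sum.cartesian_product UNIV_Times_UNIV[symmetric] del: UNIV_Times_UNIV)

lemma inner_tensor: "(f \<otimes>\<^sub>v g) \<bullet> (u \<otimes>\<^sub>v v) = (f \<bullet> u) * (g \<bullet> v)"
  by (simp add: tensor_def inner_vec_def sum_UNIV_prod sum_product algebra_simps)

lemma tensor_scaleR_left: "(c *\<^sub>R x) \<otimes>\<^sub>v y = c *\<^sub>R (x \<otimes>\<^sub>v y)"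
  by (simp add: tensor_def vec_eq_iff)

lemma tensor_scaleR_right: "x \<otimes>\<^sub>v (c *\<^sub>R y) = c *\<^sub>R (x \<otimes>\<^sub>v y)"
  by (simp add: tensor_def vec_eq_iff)

lemma tensor_zero_right [simp]: "x \<otimes>\<^sub>v 0 = 0"
  by (simp add: tensor_def vec_eq_iff)

definition slice :: "real^(('a::finite \<times> 'i::finite) \<times> 'j::finite) \<Rightarrow> 'a \<Rightarrow> real^('i \<times> 'j)" where
  "slice z a = (\<chi> q. z $ ((a, fst q), snd q))"

lemma id_tensor_component: "id_tensor L z $ p = L (slice z (fst p)) $ snd p"
  by (simp add: id_tensor_def slice_def)

lemma slice_add: "slice (z + z') a = slice z a + slice z' a"
  by (simp add: slice_def vec_eq_iff)

lemma slice_scaleR: "slice (c *\<^sub>R z) a = c *\<^sub>R slice z a"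
  by (simp add: slice_def vec_eq_iff)

lemma slice_tensor: "slice ((x \<otimes>\<^sub>v u) \<otimes>\<^sub>v v) a = (x $ a) *\<^sub>R (u \<otimes>\<^sub>v v)"
  by (simp add: slice_def tensor_def vec_eq_iff)

lemma linear_id_tensor: "linear L \<Longrightarrow> linear (id_tensor L)"
  by (rule linearI) (simp_all add: vec_eq_iff id_tensor_component slice_add slice_scaleR
      linear_add linear_scale)

lemma id_tensor_tensor:
  "linear L \<Longrightarrow> id_tensor L ((x \<otimes>\<^sub>v u) \<otimes>\<^sub>v v) = x \<otimes>\<^sub>v L (u \<otimes>\<^sub>v v)"
  by (simp add: vec_eq_iff id_tensor_component slice_tensor linear_scale) (simp add: tensor_def)

lemma linear_gamma2: "linear (gamma2 \<phi>)"
  by (rule linearI) (simp_all add: vec_eq_iff gamma2_def sum.distrib sum_distrib_left algebra_simps)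

lemma gamma2_tensor_self: "gamma2 \<phi> (y \<otimes>\<^sub>v y) = (\<phi> \<bullet> y) *\<^sub>R y"
  by (simp add: gamma2_def vec_eq_iff tensor_def inner_vec_def sum_distrib_left
      sum_distrib_right algebra_simps)

lemma tensor_mem_tensor_max: "x \<in> C1 \<Longrightarrow> y \<in> C2 \<Longrightarrow> x \<otimes>\<^sub>v y \<in> tensor_max C1 C2"
  by (auto simp: tensor_max_def dual_cone_def inner_tensor)

lemma tensor_mem_dual_cone_tensor_max:
  "f \<in> dual_cone C1 \<Longrightarrow> g \<in> dual_cone C2 \<Longrightarrow> f \<otimes>\<^sub>v g \<in> dual_cone (tensor_max C1 C2)"
  by (auto simp: tensor_max_def dual_cone_def)

lemma convex_tensor_max: "convex (tensor_max C1 C2)"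
  by (auto simp: convex_def tensor_max_def inner_add_right)

lemma zero_mem_tensor_max: "0 \<in> tensor_max C1 C2"
  by (simp add: tensor_max_def)

lemma convex_cone_dual_cone: "convex_cone (dual_cone C)"
  by (auto simp: convex_cone_iff dual_cone_def inner_add_left)

lemma convex_cone_tensor_min:
  assumes "convex_cone C1" "C2 \<noteq> {}"
  shows "convex_cone (tensor_min C1 C2)"
proof -
  have "cone {x \<otimes>\<^sub>v y | x y. x \<in> C1 \<and> y \<in> C2}"
    using assms(1) by (fastforce simp: cone_def tensor_scaleR_left[symmetric] convex_cone_scaleR)
  then have "cone (tensor_min C1 C2)"
    unfolding tensor_min_def by (rule cone_convex_hull)
  moreover have "tensor_min C1 C2 \<noteq> {}"
    using assms convex_cone_nonempty unfolding tensor_min_def by fastforce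
  ultimately show ?thesis
    by (simp add: convex_cone_def tensor_min_def cone_def conic_def)
qed

lemma tensor_mem_tensor_min: "x \<in> C1 \<Longrightarrow> y \<in> C2 \<Longrightarrow> x \<otimes>\<^sub>v y \<in> tensor_min C1 C2"
  unfolding tensor_min_def by (rule hull_inc) blast

lemma convex_cone_sum_list: "convex_cone S \<Longrightarrow> set xs \<subseteq> S \<Longrightarrow> sum_list xs \<in> S"
  by (induction xs) (auto simp: convex_cone_contains_0 convex_cone_add)

lemma mem_if_dual_cone_nonneg:
  fixes C :: "(real^'n) set"
  assumes "closed C" "convex_cone C" and nonneg: "\<forall>f\<in>dual_cone C. 0 \<le> f \<bullet> z"
  shows "z \<in> C"
proof (rule ccontr)
  assume "z \<notin> C"
  moreover have "convex C"
    using assms(2) by (simp add: convex_cone_def)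
  ultimately obtain a b where sep: "a \<bullet> z < b" "\<forall>x\<in>C. b < a \<bullet> x"
    using separating_hyperplane_closed_point assms(1) by blast
  have "b < 0"
    using sep(2) convex_cone_contains_0[OF assms(2)] by auto
  have "a \<in> dual_cone C"
    unfolding dual_cone_def
  proof safe
    fix x assume "x \<in> C"
    show "0 \<le> a \<bullet> x"
    proof (rule ccontr)
      assume neg: "\<not> 0 \<le> a \<bullet> x"
      define c where "c = b / (a \<bullet> x)"
      have "0 \<le> c"
        using neg \<open>b < 0\<close> by (simp add: c_def divide_nonpos_neg)
      then have "b < a \<bullet> (c *\<^sub>R x)"
        using sep(2) assms(2) \<open>x \<in> C\<close> convex_cone_scaleR by blast
      moreover have "a \<bullet> (c *\<^sub>R x) = b"
        using neg by (simp add: c_def)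
      ultimately show False by simp
    qed
  qed
  then show False
    using nonneg sep(1) \<open>b < 0\<close> by force
qed

text \<open>contract w z is (Id \<otimes> w) z, with w read as a linear form on R^i \<otimes> R^j.\<close>
definition contract :: "real^('i::finite \<times> 'j::finite) \<Rightarrow> real^(('a::finite \<times> 'i) \<times> 'j) \<Rightarrow> real^'a" where
  "contract w z = (\<chi> a. w \<bullet> slice z a)"

lemma linear_contract: "linear (\<lambda>w. contract w z)"
  by (rule linearI) (simp_all add: contract_def vec_eq_iff inner_add_left)

lemma inner_contract_tensor: "f \<bullet> contract (u \<otimes>\<^sub>v v) z = ((f \<otimes>\<^sub>v u) \<otimes>\<^sub>v v) \<bullet> z"
  by (simp add: contract_def slice_def inner_vec_def tensor_def sum_UNIV_prod sum_distrib_left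
      algebra_simps)

lemma contract_mem_cone:
  fixes CA :: "(real^'a::finite) set"
  assumes "closed CA" "convex_cone CA"
    and z: "z \<in> tensor_max (tensor_max CA C2) C3"
    and w: "w \<in> tensor_min (dual_cone C2) (dual_cone C3)"
  shows "contract w z \<in> CA"
proof -
  have "convex ((\<lambda>w. contract w z) -` CA)"
    using assms(2) by (simp add: convex_cone_def convex_linear_vimage linear_contract)
  moreover have "contract (u \<otimes>\<^sub>v v) z \<in> CA" if "u \<in> dual_cone C2" "v \<in> dual_cone C3" for u v
  proof (rule mem_if_dual_cone_nonneg[OF assms(1,2)], intro ballI)
    fix f assume "f \<in> dual_cone CA"
    then have "f \<otimes>\<^sub>v u \<in> dual_cone (tensor_max CA C2)"
      using that(1) by (rule tensor_mem_dual_cone_tensor_max)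
    then show "0 \<le> f \<bullet> contract (u \<otimes>\<^sub>v v) z"
      using z that(2) unfolding inner_contract_tensor tensor_max_def by blast
  qed
  ultimately have "tensor_min (dual_cone C2) (dual_cone C3) \<subseteq> (\<lambda>w. contract w z) -` CA"
    unfolding tensor_min_def by (intro hull_minimal) auto
  then show ?thesis
    using w by blast
qed

lemma id_tensor_sum_list:
  assumes "\<And>y. L y = (\<Sum>(S, x)\<leftarrow>ps. (S \<bullet> y) *\<^sub>R x)"
  shows "id_tensor L z = (\<Sum>(S, x)\<leftarrow>ps. contract S z \<otimes>\<^sub>v x)"
  using assms
proof (induction ps arbitrary: L)
  case Nil
  then show ?case by (simp add: vec_eq_iff id_tensor_component)
next
  case (Cons Sx ps)
  obtain S x where "Sx = (S, x)" by fastforce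
  let ?R = "\<lambda>y. \<Sum>(S, x)\<leftarrow>ps. (S \<bullet> y) *\<^sub>R x"
  have "id_tensor L z $ p = (contract S z \<otimes>\<^sub>v x) $ p + id_tensor ?R z $ p" for p
    using Cons.prems \<open>Sx = (S, x)\<close> by (simp add: id_tensor_component contract_def tensor_def)
  then show ?case
    using Cons.IH \<open>Sx = (S, x)\<close> by (simp add: vec_eq_iff)
qed

lemma id_tensor_tensor_max_subset_tensor_min:
  fixes CA :: "(real^'a::finite) set"
  assumes "closed CA" "convex_cone CA" "C \<noteq> {}"
    and decomposition: "\<And>y. L y = (\<Sum>(S, x)\<leftarrow>ps. (S \<bullet> y) *\<^sub>R x)"
    and terms: "\<And>S x. (S, x) \<in> set ps \<Longrightarrow> S \<in> tensor_min (dual_cone C2) (dual_cone C3) \<and> x \<in> C"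
  shows "id_tensor L ` tensor_max (tensor_max CA C2) C3 \<subseteq> tensor_min CA C"
proof
  fix w assume "w \<in> id_tensor L ` tensor_max (tensor_max CA C2) C3"
  then obtain z where z: "z \<in> tensor_max (tensor_max CA C2) C3" and "w = id_tensor L z"
    by blast
  then have "w = (\<Sum>(S, x)\<leftarrow>ps. contract S z \<otimes>\<^sub>v x)"
    using id_tensor_sum_list decomposition by blast
  moreover have "set (map (\<lambda>(S, x). contract S z \<otimes>\<^sub>v x) ps) \<subseteq> tensor_min CA C"
    using terms contract_mem_cone[OF assms(1,2) z] tensor_mem_tensor_min by fastforce
  ultimately show "w \<in> tensor_min CA C"
    using convex_cone_sum_list convex_cone_tensor_min[OF assms(2,3)] by metis
qed

lemma tensor_min_subset_id_tensor_gamma2_image: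
  fixes C1 :: "(real^'a::finite) set" and C2 :: "(real^'k::finite) set"
  assumes "cone C2" and pos: "\<And>y. y \<in> C2 \<Longrightarrow> y \<noteq> 0 \<Longrightarrow> 0 < \<phi> \<bullet> y"
  shows "tensor_min C1 C2 \<subseteq> id_tensor (gamma2 \<phi>) ` tensor_max (tensor_max C1 C2) C2"
  unfolding tensor_min_def
proof (rule hull_minimal)
  have lin: "linear (id_tensor (gamma2 \<phi>))"
    by (rule linear_id_tensor[OF linear_gamma2])
  then show "convex (id_tensor (gamma2 \<phi>) ` tensor_max (tensor_max C1 C2) C2)"
    by (rule convex_linear_image[OF _ convex_tensor_max])
  show "{x \<otimes>\<^sub>v y | x y. x \<in> C1 \<and> y \<in> C2}
      \<subseteq> id_tensor (gamma2 \<phi>) ` tensor_max (tensor_max C1 C2) C2"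
  proof safe
    fix x y assume x: "x \<in> C1" and y: "y \<in> C2"
    show "x \<otimes>\<^sub>v y \<in> id_tensor (gamma2 \<phi>) ` tensor_max (tensor_max C1 C2) C2"
    proof (cases "y = 0")
      case True
      then have "x \<otimes>\<^sub>v y = id_tensor (gamma2 \<phi>) 0"
        using linear_0[OF lin] by simp
      then show ?thesis
        using zero_mem_tensor_max by blast
    next
      case False
      define t where "t = \<phi> \<bullet> y"
      have "0 < t"
        using pos[OF y False] by (simp add: t_def)
      then have "(1 / t) *\<^sub>R y \<in> C2"
        using \<open>cone C2\<close> y by (simp add: cone_def)
      then have "(x \<otimes>\<^sub>v y) \<otimes>\<^sub>v ((1 / t) *\<^sub>R y) \<in> tensor_max (tensor_max C1 C2) C2"
        using x y by (intro tensor_mem_tensor_max)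
      moreover have "id_tensor (gamma2 \<phi>) ((x \<otimes>\<^sub>v y) \<otimes>\<^sub>v ((1 / t) *\<^sub>R y)) = x \<otimes>\<^sub>v y"
        using \<open>0 < t\<close>
        by (simp add: tensor_scaleR_right linear_scale[OF lin] id_tensor_tensor linear_gamma2
            gamma2_tensor_self t_def)
      ultimately show ?thesis
        by (metis image_eqI)
    qed
  qed
qed

lemma symmetric_tensor_mem_tensor_min:
  "convex_cone C \<Longrightarrow> u \<in> C \<Longrightarrow> v \<in> C \<Longrightarrow> u \<otimes>\<^sub>v v + v \<otimes>\<^sub>v u \<in> tensor_min C C"
  by (metis convex_cone_add convex_cone_tensor_min empty_iff tensor_mem_tensor_min)

lemma convex_cone_CB: "convex_cone CB"
  by (simp add: CB_def convex_cone_convex_cone_hull)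

lemma generators_mem_CB: "xpp \<in> CB" "xmp \<in> CB" "xpq \<in> CB" "xmq \<in> CB"
  by (simp_all add: CB_def hull_inc)

lemma CB_subset: "CB \<subseteq> {y. \<bar>y $ 2\<bar> + \<bar>y $ 3\<bar> \<le> y $ 1}"
  unfolding CB_def
proof (rule hull_minimal)
  show "{xpp, xmp, xpq, xmq} \<subseteq> {y. \<bar>y $ 2\<bar> + \<bar>y $ 3\<bar> \<le> y $ 1}"
    by (simp add: xpp_def xmp_def xpq_def xmq_def)
  show "convex_cone {y :: real^3. \<bar>y $ 2\<bar> + \<bar>y $ 3\<bar> \<le> y $ 1}"
    unfolding convex_cone_iff
    by (auto simp: abs_mult simp flip: distrib_left intro: mult_left_mono)
qed

lemma phiB_pos:
  assumes "y \<in> CB" "y \<noteq> 0"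
  shows "0 < phiB \<bullet> y"
proof -
  have bound: "\<bar>y $ 2\<bar> + \<bar>y $ 3\<bar> \<le> y $ 1"
    using assms(1) CB_subset by blast
  have "y $ 1 \<noteq> 0"
  proof
    assume "y $ 1 = 0"
    then have "y $ i = 0" for i
      using bound exhaust_3[of i] by auto
    then show False
      using assms(2) by (simp add: vec_eq_iff)
  qed
  moreover have "phiB \<bullet> y = y $ 1"
    by (simp add: phiB_def inner_vec_def sum_3)
  ultimately show ?thesis
    using bound by linarith
qed

lemma psi_mem_dual_cone_CB: "s \<in> {1, -1} \<Longrightarrow> t \<in> {1, -1} \<Longrightarrow> psi s t \<in> dual_cone CB"
  using CB_subset by (fastforce simp: dual_cone_def psi_def inner_vec_def sum_3)

lemma gamma2_phiB_decomposition:
  "2 *\<^sub>R gamma2 phiB y =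
      ((psi 1 1 \<otimes>\<^sub>v psi 1 (-1) + psi 1 (-1) \<otimes>\<^sub>v psi 1 1) \<bullet> y) *\<^sub>R xpp
    + ((psi (-1) 1 \<otimes>\<^sub>v psi (-1) (-1) + psi (-1) (-1) \<otimes>\<^sub>v psi (-1) 1) \<bullet> y) *\<^sub>R xmp
    + ((psi 1 1 \<otimes>\<^sub>v psi (-1) 1 + psi (-1) 1 \<otimes>\<^sub>v psi 1 1) \<bullet> y) *\<^sub>R xpq
    + ((psi 1 (-1) \<otimes>\<^sub>v psi (-1) (-1) + psi (-1) (-1) \<otimes>\<^sub>v psi 1 (-1)) \<bullet> y) *\<^sub>R xmq"
  unfolding vec_eq_iff forall_3
  by (simp add: gamma2_def phiB_def psi_def tensor_def xpp_def xmp_def xpq_def xmq_def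
      inner_vec_def sum_UNIV_prod sum_3 algebra_simps)

lemma id_tensor_gamma2_phiB_subset_tensor_min:
  fixes CA :: "(real^'a::finite) set"
  assumes "closed CA" "convex_cone CA"
  shows "id_tensor (gamma2 phiB) ` tensor_max (tensor_max CA CB) CB \<subseteq> tensor_min CA CB"
proof -
  define ps where "ps =
    [(psi 1 1 \<otimes>\<^sub>v psi 1 (-1) + psi 1 (-1) \<otimes>\<^sub>v psi 1 1, (1/2) *\<^sub>R xpp),
     (psi (-1) 1 \<otimes>\<^sub>v psi (-1) (-1) + psi (-1) (-1) \<otimes>\<^sub>v psi (-1) 1, (1/2) *\<^sub>R xmp),
     (psi 1 1 \<otimes>\<^sub>v psi (-1) 1 + psi (-1) 1 \<otimes>\<^sub>v psi 1 1, (1/2) *\<^sub>R xpq),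
     (psi 1 (-1) \<otimes>\<^sub>v psi (-1) (-1) + psi (-1) (-1) \<otimes>\<^sub>v psi 1 (-1), (1/2) *\<^sub>R xmq)]"
  have "gamma2 phiB y = (\<Sum>(S, x)\<leftarrow>ps. (S \<bullet> y) *\<^sub>R x)" for y
    using arg_cong[OF gamma2_phiB_decomposition[of y], of "scaleR (1/2)"]
    by (simp add: ps_def algebra_simps)
  moreover have "S \<in> tensor_min (dual_cone CB) (dual_cone CB) \<and> x \<in> CB" if "(S, x) \<in> set ps" for S x
    using that convex_cone_dual_cone convex_cone_CB generators_mem_CB psi_mem_dual_cone_CB
    by (auto simp: ps_def intro!: symmetric_tensor_mem_tensor_min convex_cone_scaleR)
  moreover have "CB \<noteq> {}"
    using generators_mem_CB by blast
  ultimately show ?thesis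
    using id_tensor_tensor_max_subset_tensor_min[OF assms] by blast
qed

theorem mainTheorem15:
  fixes CA :: "(real^'n) set"
  assumes "proper_cone CA"
  shows "id_tensor (gamma2 phiB) ` tensor_max (tensor_max CA CB) CB = tensor_min CA CB
    \<and> (\<forall>y :: real^(3 \<times> 3).
          2 *\<^sub>R gamma2 phiB y =
            ((psi 1 1 \<otimes>\<^sub>v psi 1 (-1) + psi 1 (-1) \<otimes>\<^sub>v psi 1 1) \<bullet> y) *\<^sub>R xpp
          + ((psi (-1) 1 \<otimes>\<^sub>v psi (-1) (-1) + psi (-1) (-1) \<otimes>\<^sub>v psi (-1) 1) \<bullet> y) *\<^sub>R xmp
          + ((psi 1 1 \<otimes>\<^sub>v psi (-1) 1 + psi (-1) 1 \<otimes>\<^sub>v psi 1 1) \<bullet> y) *\<^sub>R xpq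
          + ((psi 1 (-1) \<otimes>\<^sub>v psi (-1) (-1) + psi (-1) (-1) \<otimes>\<^sub>v psi 1 (-1)) \<bullet> y) *\<^sub>R xmq)"
proof -
  have "closed CA" "convex_cone CA"
    using assms by (auto simp: proper_cone_def convex_cone_def conic_def cone_def)
  then have "id_tensor (gamma2 phiB) ` tensor_max (tensor_max CA CB) CB \<subseteq> tensor_min CA CB"
    by (rule id_tensor_gamma2_phiB_subset_tensor_min)
  moreover have "tensor_min CA CB \<subseteq> id_tensor (gamma2 phiB) ` tensor_max (tensor_max CA CB) CB"
    using convex_cone_CB phiB_pos
    by (intro tensor_min_subset_id_tensor_gamma2_image) (auto simp: convex_cone_def conic_def cone_def)
  ultimately show ?thesis
    using gamma2_phiB_decomposition by blast
qed

end
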